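(* For every $(s_0,p_0)\in G_2\setminus\{(0,0)\}$ there exist a finite Blaschke product $B$ of degree one or two with $B(0)=0$ and $\sigma\in\mathbb D\setminus\{0\}$ such that the map $\varphi(\lambda)=\big(B(\sqrt\lambda)+B(-\sqrt\lambda),\,B(\sqrt\lambda)B(-\sqrt\lambda)\big)$, $\lambda\in\mathbb D$, satisfies $\varphi(\sigma^2)=(s_0,p_0)$. Equivalently, writing $(s_0,p_0)=(t_1+t_2,t_1t_2)$ with $t_1,t_2\in\mathbb D$, there are such $B$ and $\sigma$ with $B(\sigma)=t_1$ and $B(-\sigma)=t_2$. *)

theory Defs
  imports "HOL-Analysis.Analysis"
begin

definition symmetrized_bidisc :: "(complex \<times> complex) set" where
  "symmetrized_bidisc = {(z1 + z2, z1 * z2) | z1 z2. norm z1 < 1 \<and> norm z2 < 1}"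

definition blaschke_factor :: "complex \<Rightarrow> complex \<Rightarrow> complex" where
  "blaschke_factor a z = (z - a) / (1 - cnj a * z)"

definition finite_blaschke :: "(complex \<Rightarrow> complex) \<Rightarrow> nat \<Rightarrow> bool" where
  "finite_blaschke B n \<longleftrightarrow>
     (\<exists>c as. norm c = 1 \<and> length as = n \<and> (\<forall>a\<in>set as. norm a < 1) \<and>
        (\<forall>z\<in>ball 0 1. B z = c * (\<Prod>a\<leftarrow>as. blaschke_factor a z)))"

definition sym_lift :: "(complex \<Rightarrow> complex) \<Rightarrow> complex \<Rightarrow> complex \<times> complex" where
  "sym_lift B w = (B (csqrt w) + B (- csqrt w), B (csqrt w) * B (- csqrt w))"

end

theory Submission
  imports Defs "HOL-Complex_Analysis.Riemann_Mapping"
begin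

(* Write (s0, p0) = (t1 + t2, t1 t2). Since sym_lift B (sigma^2) = (B sigma + B (-sigma),
   B sigma * B (-sigma)) for every sigma, it suffices to find B and sigma with B sigma = t1 and
   B (-sigma) = t2. If t1 + t2 = 0, then B z = z and sigma = t1 do. Otherwise take sigma = r
   real and B z = z * m z with m a disc automorphism, which must send r to t1/r and -r to -t2/r.
   An automorphism of the disc carrying one pair of points to another exists iff both pairs have
   the same pseudo-hyperbolic distance |w - z| / |1 - cnj z * w|, which is 2r/(1 + r^2) for the
   pair r, -r. For the pair t1/r, -t2/r it is 1 at r = max |t_i| (one of the points is then
   unimodular) and less than 1 at r = 1, so the intermediate value theorem yields r. *)

lemma blaschke_factor_eq_Moebius_function: "blaschke_factor a = Moebius_function 0 a"
  by (simp add: fun_eq_iff blaschke_factor_def Moebius_function_simple)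

lemma blaschke_denominator_nonzero:
  fixes a z :: complex
  assumes "norm a < 1" "norm z < 1"
  shows "1 - cnj a * z \<noteq> 0"
proof
  assume "1 - cnj a * z = 0"
  then have "norm (cnj a * z) = 1" by (metis norm_one right_minus_eq)
  moreover have "norm (cnj a * z) < 1"
    using assms mult_strict_mono'[of "norm a" 1 "norm z" 1] by (simp add: norm_mult)
  ultimately show False by simp
qed

lemma norm_blaschke_factor_less:
  assumes "norm a < 1" "norm z < 1"
  shows "norm (blaschke_factor a z) < 1"
  using Moebius_function_norm_lt_1 assms by (simp add: blaschke_factor_eq_Moebius_function)

lemma blaschke_factor_inverse:
  assumes "norm a < 1" "norm z < 1"
  shows "blaschke_factor (- a) (blaschke_factor a z) = z"
  using Moebius_function_compose assms by (simp add: blaschke_factor_eq_Moebius_function)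

lemma blaschke_factor_eq_0_iff:
  assumes "norm a < 1" "norm z < 1"
  shows "blaschke_factor a z = 0 \<longleftrightarrow> z = a"
  using blaschke_denominator_nonzero[OF assms] by (simp add: blaschke_factor_def)

lemma norm_add_less_norm_one_add_cnj_mult:
  fixes t1 t2 :: complex
  assumes "norm t1 < 1" "norm t2 < 1"
  shows "norm (t1 + t2) < norm (1 + cnj t1 * t2)"
proof -
  have "norm ((t2 + t1) / (1 + cnj t1 * t2)) < 1"
    using norm_blaschke_factor_less[of "- t1" t2] assms by (simp add: blaschke_factor_def)
  moreover have "1 + cnj t1 * t2 \<noteq> 0"
    using blaschke_denominator_nonzero[of "- t1" t2] assms by simp
  ultimately show ?thesis by (simp add: norm_divide divide_less_eq add.commute)
qed

lemma blaschke_factor_rotated_preimage: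
  fixes a b l :: complex
  assumes "norm l = 1"
  shows "blaschke_factor (- a) (cnj l * b) = (l * a + b) / (l + b * cnj a)"
proof -
  have "l \<noteq> 0" and cnj_l: "cnj l = 1 / l"
    using assms divide_conv_cnj[OF assms, of 1] by auto
  have "l * (cnj l * b + a) = l * a + b" "l * (1 + cnj a * (cnj l * b)) = l + b * cnj a"
    using \<open>l \<noteq> 0\<close> unfolding cnj_l by (simp_all add: field_simps)
  moreover have "blaschke_factor (- a) (cnj l * b)
      = l * (cnj l * b + a) / (l * (1 + cnj a * (cnj l * b)))"
    using \<open>l \<noteq> 0\<close> by (simp add: blaschke_factor_def)
  ultimately show ?thesis
    by (simp only:)
qed

lemma blaschke_factor_compose:
  fixes a b l :: complex
  assumes a: "norm a < 1" and b: "norm b < 1" and l: "norm l = 1"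
  obtains c a' where "norm c = 1" "norm a' < 1"
    "\<And>z. norm z < 1 \<Longrightarrow>
      blaschke_factor b (l * blaschke_factor a z) = c * blaschke_factor a' z"
proof -
  define \<kappa> where "\<kappa> = 1 + cnj b * l * a"
  define \<mu> where "\<mu> = l + b * cnj a"
  define a' where "a' = (l * a + b) / \<mu>"
  define c where "c = \<mu> / \<kappa>"
  have "l \<noteq> 0" and cnj_l: "cnj l = 1 / l"
    using l divide_conv_cnj[OF l, of 1] by auto
  have \<mu>_eq: "\<mu> = l * cnj \<kappa>"
    using \<open>l \<noteq> 0\<close> by (simp add: \<mu>_def \<kappa>_def cnj_l field_simps)
  have "\<kappa> \<noteq> 0"
    using blaschke_denominator_nonzero[of "- b" "l * a"] a b l
    by (simp add: \<kappa>_def norm_mult ac_simps)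
  then have "\<mu> \<noteq> 0" "norm c = 1"
    using l \<open>l \<noteq> 0\<close> by (simp_all add: \<mu>_eq c_def norm_divide norm_mult)
  \<comment> \<open>a' is the zero of the composite: the preimage of b under l * blaschke_factor a.\<close>
  have "norm a' < 1"
    using norm_blaschke_factor_less[of "- a" "cnj l * b"] blaschke_factor_rotated_preimage[OF l]
      a b l
    by (simp add: a'_def \<mu>_def norm_mult)
  moreover have "blaschke_factor b (l * blaschke_factor a z) = c * blaschke_factor a' z"
    if z: "norm z < 1" for z
  proof -
    define d where "d = 1 - cnj a * z"
    have "d \<noteq> 0"
      using blaschke_denominator_nonzero[OF a z] by (simp add: d_def)
    have "\<kappa> * cnj a' = cnj a + cnj b * l"
      using \<open>\<kappa> \<noteq> 0\<close> \<open>l \<noteq> 0\<close> unfolding a'_def \<mu>_eq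
      by (simp add: field_simps cnj_l)
    have num: "l * blaschke_factor a z - b = (\<mu> * z - (l * a + b)) / d"
      using \<open>d \<noteq> 0\<close> unfolding blaschke_factor_def d_def \<mu>_def
      by (simp add: field_simps)
    have den:
      "1 - cnj b * (l * blaschke_factor a z) = (\<kappa> - (cnj a + cnj b * l) * z) / d"
      using \<open>d \<noteq> 0\<close> unfolding blaschke_factor_def d_def \<kappa>_def
      by (simp add: field_simps)
    have "blaschke_factor b (l * blaschke_factor a z)
        = (\<mu> * z - (l * a + b)) / (\<kappa> - (cnj a + cnj b * l) * z)"
      using \<open>d \<noteq> 0\<close> by (simp add: blaschke_factor_def[of b] num den)
    also have "\<dots> = \<mu> * (z - a') / (\<kappa> * (1 - cnj a' * z))"
    proof -
      have "\<mu> * (z - a') = \<mu> * z - (l * a + b)"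
        using \<open>\<mu> \<noteq> 0\<close> by (simp add: a'_def right_diff_distrib)
      moreover have "\<kappa> * (1 - cnj a' * z) = \<kappa> - (cnj a + cnj b * l) * z"
        using \<open>\<kappa> * cnj a' = cnj a + cnj b * l\<close>
        by (simp add: right_diff_distrib mult.assoc[symmetric])
      ultimately show ?thesis
        by (simp only:)
    qed
    also have "\<dots> = c * blaschke_factor a' z"
      by (simp add: c_def blaschke_factor_def)
    finally show ?thesis .
  qed
  ultimately show ?thesis
    using that \<open>norm c = 1\<close> by blast
qed

lemma disc_automorphism_two_point_interpolation:
  fixes z1 z2 w1 w2 :: complex
  assumes z: "norm z1 < 1" "norm z2 < 1" "z1 \<noteq> z2" and w: "norm w1 < 1" "norm w2 < 1"
    and pseudo_distance_eq: "norm (blaschke_factor w1 w2) = norm (blaschke_factor z1 z2)"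
  obtains c a where "norm c = 1" "norm a < 1"
    "c * blaschke_factor a z1 = w1" "c * blaschke_factor a z2 = w2"
proof -
  have "blaschke_factor z1 z2 \<noteq> 0"
    using blaschke_factor_eq_0_iff z by auto
  define l where "l = blaschke_factor w1 w2 / blaschke_factor z1 z2"
  have "norm l = 1"
    using \<open>blaschke_factor z1 z2 \<noteq> 0\<close> pseudo_distance_eq
    by (simp add: l_def norm_divide)
  then obtain c a where "norm c = 1" "norm a < 1"
    and compose: "\<And>z. norm z < 1 \<Longrightarrow>
      blaschke_factor (- w1) (l * blaschke_factor z1 z) = c * blaschke_factor a z"
    using blaschke_factor_compose[of z1 "- w1" l] z w by auto
  have "c * blaschke_factor a z1 = blaschke_factor (- w1) 0"
    using compose[OF z(1)] by (simp add: blaschke_factor_def)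
  also have "\<dots> = w1"
    by (simp add: blaschke_factor_def)
  finally have "c * blaschke_factor a z1 = w1" .
  moreover have "c * blaschke_factor a z2 = blaschke_factor (- w1) (blaschke_factor w1 w2)"
    using compose[OF z(2)] \<open>blaschke_factor z1 z2 \<noteq> 0\<close> by (simp add: l_def)
  with blaschke_factor_inverse[OF w] have "c * blaschke_factor a z2 = w2"
    by simp
  ultimately show ?thesis
    using that \<open>norm c = 1\<close> \<open>norm a < 1\<close> by blast
qed

lemma exists_radius_balancing:
  fixes t1 t2 :: complex
  assumes "norm t1 < 1" "norm t2 < 1" "t1 + t2 \<noteq> 0"
  obtains r where "max (norm t1) (norm t2) < r" "r < 1"
    "2 * norm (of_real r ^ 2 + cnj t1 * t2) = norm (t1 + t2) * (1 + r ^ 2)"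
proof -
  define f where
    "f x = 2 * norm (of_real x ^ 2 + cnj t1 * t2) - norm (t1 + t2) * (1 + x ^ 2)" for x
  define M where "M = max (norm t1) (norm t2)"
  have "0 \<le> M" "M < 1"
    using assms by (auto simp: M_def le_max_iff_disj)
  have "norm (of_real M ^ 2 + cnj t1 * t2) = M * norm (t1 + t2)"
  proof (cases "norm t2 \<le> norm t1")
    case True
    then have "of_real M ^ 2 + cnj t1 * t2 = cnj t1 * (t1 + t2)"
      by (simp add: M_def complex_norm_square[symmetric] algebra_simps)
    then show ?thesis
      using True by (simp add: M_def norm_mult)
  next
    case False
    then have "of_real M ^ 2 + cnj t1 * t2 = t2 * cnj (t1 + t2)"
      by (simp add: M_def complex_norm_square[symmetric] algebra_simps)
    then show ?thesis
      using False by (simp add: M_def norm_mult flip: complex_cnj_add)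
  qed
  then have "f M = - norm (t1 + t2) * (1 - M) ^ 2"
    by (simp add: f_def algebra_simps power2_eq_square)
  with assms(3) \<open>M < 1\<close> have "f M < 0"
    by (simp add: mult_pos_pos)
  moreover have "f 1 > 0"
    using norm_add_less_norm_one_add_cnj_mult[OF assms(1,2)] by (simp add: f_def)
  moreover have "\<forall>x. M \<le> x \<and> x \<le> 1 \<longrightarrow> isCont f x"
    unfolding f_def by (intro allI impI continuous_intros)
  ultimately obtain r where "M \<le> r" "r \<le> 1" "f r = 0"
    using IVT[of f M 0 1] \<open>M < 1\<close> by auto
  moreover have "r \<noteq> M" "r \<noteq> 1"
    using \<open>f M < 0\<close> \<open>f 1 > 0\<close> \<open>f r = 0\<close> by auto
  ultimately have "M < r" "r < 1" "f r = 0"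
    by auto
  then show ?thesis
    using that unfolding M_def f_def by simp
qed

lemma blaschke_factor_scaled:
  fixes t1 t2 :: complex and r :: real
  assumes "r \<noteq> 0"
  shows "blaschke_factor (t1 / of_real r) (- (t2 / of_real r))
      = - (of_real r * (t1 + t2)) / (of_real r ^ 2 + cnj t1 * t2)"
proof -
  define R where "R = complex_of_real r"
  define q where "q = R ^ 2 + cnj t1 * t2"
  have "R \<noteq> 0"
    using assms by (simp add: R_def)
  have "- (t2 / R) - t1 / R = - (t1 + t2) / R"
    by (simp add: diff_divide_distrib)
  moreover have "1 - cnj (t1 / R) * - (t2 / R) = q / R ^ 2"
    using \<open>R \<noteq> 0\<close> by (simp add: q_def R_def field_simps power2_eq_square)
  ultimately have "blaschke_factor (t1 / R) (- (t2 / R)) = (- (t1 + t2) / R) / (q / R ^ 2)"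
    by (simp add: blaschke_factor_def)
  also have "\<dots> = - (R * (t1 + t2)) / q"
    using \<open>R \<noteq> 0\<close> by (cases "q = 0") (simp_all add: field_simps power2_eq_square)
  finally show ?thesis
    by (simp add: R_def q_def)
qed

lemma blaschke_factor_real_opposite:
  fixes r :: real
  shows "blaschke_factor (of_real r) (- of_real r) = - of_real (2 * r / (1 + r ^ 2))"
  by (simp add: blaschke_factor_def power2_eq_square)

lemma norm_blaschke_factor_scaled_eq:
  fixes t1 t2 :: complex and r :: real
  assumes "0 < r" "t1 + t2 \<noteq> 0"
    and balanced: "2 * norm (of_real r ^ 2 + cnj t1 * t2) = norm (t1 + t2) * (1 + r ^ 2)"
  shows "norm (blaschke_factor (t1 / of_real r) (- (t2 / of_real r)))
      = norm (blaschke_factor (of_real r) (- of_real r))"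
proof -
  define q where "q = of_real r ^ 2 + cnj t1 * t2"
  have "0 < 1 + r ^ 2"
    by (simp add: add_pos_nonneg)
  with balanced assms(2) have "q \<noteq> 0"
    by (auto simp: q_def)
  have "norm (blaschke_factor (t1 / of_real r) (- (t2 / of_real r)))
      = r * norm (t1 + t2) / norm q"
    using \<open>0 < r\<close> by (simp add: q_def blaschke_factor_scaled norm_divide norm_mult)
  also have "\<dots> = 2 * r / (1 + r ^ 2)"
    using balanced \<open>q \<noteq> 0\<close> \<open>0 < 1 + r ^ 2\<close> by (simp add: q_def field_simps)
  also have "\<dots> = norm (blaschke_factor (of_real r) (- of_real r))"
    using \<open>0 < r\<close> \<open>0 < 1 + r ^ 2\<close>
    unfolding blaschke_factor_real_opposite norm_minus_cancel norm_of_real by simp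
  finally show ?thesis .
qed

lemma finite_blaschke_id: "finite_blaschke (\<lambda>z. z) 1"
  unfolding finite_blaschke_def
  by (intro exI[of _ 1] exI[of _ "[0]"]) (simp add: blaschke_factor_def)

lemma finite_blaschke_id_mult_factor:
  assumes "norm c = 1" "norm a < 1"
  shows "finite_blaschke (\<lambda>z. z * (c * blaschke_factor a z)) 2"
  unfolding finite_blaschke_def using assms
  by (intro exI[of _ c] exI[of _ "[0, a]"]) (simp add: blaschke_factor_def)

lemma exists_degree_two_blaschke_interpolation:
  fixes t1 t2 :: complex
  assumes "norm t1 < 1" "norm t2 < 1" "t1 + t2 \<noteq> 0"
  obtains B r where "finite_blaschke B 2" "B 0 = 0" "0 < r" "r < 1"
    "B (of_real r) = t1" "B (- of_real r) = t2"
proof -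
  obtain r where r: "max (norm t1) (norm t2) < r" "r < 1"
    and balanced: "2 * norm (of_real r ^ 2 + cnj t1 * t2) = norm (t1 + t2) * (1 + r ^ 2)"
    using exists_radius_balancing[OF assms] .
  define R :: complex where "R = of_real r"
  define u where "u = t1 / R"
  define v where "v = t2 / R"
  have "0 < r"
    using r(1) norm_ge_zero[of t1] by (meson le_less_trans max.strict_boundedE)
  then have "norm R = r" "R \<noteq> 0" "norm R < 1"
    using r(2) by (simp_all add: R_def)
  have "norm u < 1" "norm (- v) < 1"
    using r \<open>0 < r\<close>
    by (simp_all add: u_def v_def norm_divide \<open>norm R = r\<close> divide_less_eq)
  moreover have "norm (blaschke_factor u (- v)) = norm (blaschke_factor R (- R))"
    using norm_blaschke_factor_scaled_eq[OF \<open>0 < r\<close> assms(3) balanced]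
    by (simp add: u_def v_def R_def)
  ultimately obtain c a where "norm c = 1" "norm a < 1"
    and interpolates: "c * blaschke_factor a R = u" "c * blaschke_factor a (- R) = - v"
    using disc_automorphism_two_point_interpolation[of R "- R" u "- v"]
      \<open>norm R < 1\<close> \<open>R \<noteq> 0\<close>
    by auto
  define B where "B z = z * (c * blaschke_factor a z)" for z
  have "finite_blaschke B 2"
    unfolding B_def by (rule finite_blaschke_id_mult_factor) fact+
  moreover have "B R = t1" "B (- R) = t2"
    using interpolates \<open>R \<noteq> 0\<close> by (simp_all add: B_def u_def v_def)
  ultimately show ?thesis
    using that \<open>0 < r\<close> r(2) unfolding R_def by (simp add: B_def)
qed

lemma sym_lift_power2: "sym_lift B (\<sigma>\<^sup>2) = (B \<sigma> + B (- \<sigma>), B \<sigma> * B (- \<sigma>))"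
proof -
  have "csqrt (\<sigma>\<^sup>2) = \<sigma> \<or> csqrt (\<sigma>\<^sup>2) = - \<sigma>"
    by (metis power2_csqrt power2_eq_iff)
  then show ?thesis
    by (auto simp: sym_lift_def)
qed

theorem mainTheorem6:
  fixes s0 p0 :: complex
  assumes "(s0, p0) \<in> symmetrized_bidisc" and "(s0, p0) \<noteq> (0, 0)"
  shows "\<exists>B \<sigma>. (finite_blaschke B 1 \<or> finite_blaschke B 2) \<and> B 0 = 0 \<and>
           \<sigma> \<in> ball 0 1 \<and> \<sigma> \<noteq> 0 \<and> sym_lift B (\<sigma>\<^sup>2) = (s0, p0)"
proof -
  obtain t1 t2 where t: "norm t1 < 1" "norm t2 < 1"
    and st: "s0 = t1 + t2" "p0 = t1 * t2"
    using assms(1) unfolding symmetrized_bidisc_def by blast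
  show ?thesis
  proof (cases "t1 + t2 = 0")
    case True
    then have "t2 = - t1" "t1 \<noteq> 0"
      using assms(2) st by (auto simp: add_eq_0_iff)
    then show ?thesis
      using finite_blaschke_id t st
      by (intro exI[of _ "\<lambda>z. z"] exI[of _ t1]) (simp add: sym_lift_power2)
  next
    case False
    then obtain B r where "finite_blaschke B 2" "B 0 = 0" "0 < r" "r < 1"
      "B (of_real r) = t1" "B (- of_real r) = t2"
      using exists_degree_two_blaschke_interpolation t by blast
    then show ?thesis
      using st
      by (intro exI[of _ B] exI[of _ "of_real r"]) (simp add: sym_lift_power2)
  qed
qed

end
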